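(* Let $U_1,U_2,\dots$ be i.i.d. almost surely positive random variables distributed as $U$ with tail function $Q(x)=\mathbb{P}(U>x)$, and assume $\mathbb{E}[U^2]<\infty$ and that there exist $\beta\in(0,1/2)$ and $x_0>0$ in the interior of the support of $U$ such that $Q^{1/2-\beta}$ is convex on $[x_0,\infty)$. Let $V_1\le\dots\le V_N$ be the order statistics of $(U_1,\dots,U_N)$; conditionally on them let $(X_{i,j})_{1\le i<j\le N}$ be independent Bernoulli with $\mathbb{P}_V(X_{i,j}=1)=\frac{V_i}{V_i+V_j}$, $X_{j,i}=1-X_{i,j}$, $S_i=\sum_{j\ne i}X_{i,j}$ and $Z_N=\max_{1\le i\le N-1}S_i$. Let $\eta$ be a non-increasing deterministic function on $\mathbb{R}_+$ with $\lim_{+\infty}\eta=0$ such that $\mathbb{P}(B_N)\to1$, where $B_N=\{V_N/\sqrt N\le\eta(N)\}$, and let $C_N=\{\frac14\mathbb{E}[U]\le E_N(V)\le 2\mathbb{E}[U]\}$ with $E_N(V)=\frac1N\sum_{i=1}^{N-1}\frac{V_iV_{N-1}}{V_{N-1}+V_i}$. Then for $N$ large enough, on $B_N\cap C_N$, \[\mathbb{E}_V[Z_N]\le \sum_{i=1}^{N-1}\frac{V_{N-1}}{V_{N-1}+V_i}+\sqrt{8\,\mathbb{E}[U]\frac{N\log N}{V_{N-1}}}.\]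
   Context: $\mathbb{P}_V$ and $\mathbb{E}_V$ denote probability and expectation conditionally on $(V_1,\dots,V_N)$. *)

theory Defs
  imports "HOL-Probability.Probability"
begin

definition real_support :: "real measure \<Rightarrow> real set" where
  "real_support \<mu> = {x. \<forall>e>0. emeasure \<mu> (ball x e) > 0}"

definition order_stat :: "(nat \<Rightarrow> 'a \<Rightarrow> real) \<Rightarrow> nat \<Rightarrow> 'a \<Rightarrow> nat \<Rightarrow> real" where
  "order_stat U N \<omega> k = sort (map (\<lambda>i. U i \<omega>) [1..<N+1]) ! (k - 1)"

(* Conditional law (given V = v) of (X_{i,j})_{1<=i<j<=N}: independent Bernoulli(v_i/(v_i+v_j)) *)
definition tourn_pmf :: "nat \<Rightarrow> (nat \<Rightarrow> real) \<Rightarrow> (nat \<times> nat \<Rightarrow> bool) pmf" where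
  "tourn_pmf N v = Pi_pmf {(i,j). 1 \<le> i \<and> i < j \<and> j \<le> N} False
      (\<lambda>(i,j). bernoulli_pmf (v i / (v i + v j)))"

definition Xwin :: "(nat \<times> nat \<Rightarrow> bool) \<Rightarrow> nat \<Rightarrow> nat \<Rightarrow> bool" where
  "Xwin X i j = (if i < j then X (i,j) else \<not> X (j,i))"

definition score :: "nat \<Rightarrow> (nat \<times> nat \<Rightarrow> bool) \<Rightarrow> nat \<Rightarrow> real" where
  "score N X i = (\<Sum>j\<in>{1..N} - {i}. of_bool (Xwin X i j))"

definition Zmax :: "nat \<Rightarrow> (nat \<times> nat \<Rightarrow> bool) \<Rightarrow> real" where
  "Zmax N X = Max ((\<lambda>i. score N X i) ` {1..N-1})"

(* E_V[Z_N] as a function of the values v = (V_1,...,V_N) *)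
definition cond_exp_Z :: "nat \<Rightarrow> (nat \<Rightarrow> real) \<Rightarrow> real" where
  "cond_exp_Z N v = measure_pmf.expectation (tourn_pmf N v) (Zmax N)"

definition E_N :: "nat \<Rightarrow> (nat \<Rightarrow> real) \<Rightarrow> real" where
  "E_N N v = (1 / real N) * (\<Sum>i=1..N-1. v i * v (N-1) / (v (N-1) + v i))"

end

theory Submission
  imports Defs
begin

text \<open>
  The bound holds for every positive non-decreasing vector \<open>V\<close> with \<open>E_N(V) \<le> 2 E[U]\<close> and
  \<open>N \<ge> 2\<close>; the probabilistic hypotheses only make the order statistics almost surely positive.
  Put \<open>a = V (N-1)\<close>, \<open>A = \<Sum>\<^sub>j\<^sub><\<^sub>N V j / (a + V j)\<close> (\<open>loss_mass\<close>) and let \<open>M = N - 1 - A\<close>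
  (\<open>win_mass\<close>) be the sum in the claim.
  For \<open>i < N\<close> the score \<open>S i\<close> is a sum of independent Bernoulli variables whose losing
  probabilities \<open>V j / (V i + V j)\<close> dominate \<open>V j / (a + V j)\<close>, so its moment generating
  function is at most \<open>exp (l M + A l\<^sup>2/2 + 1/2)\<close>. Jensen's inequality and a union bound over
  the \<open>N - 1\<close> scores give \<open>l E_V[Z_N] \<le> ln N + l M + A l\<^sup>2/2 + 1/2\<close> for all \<open>l > 0\<close>;
  optimising in \<open>l\<close> yields \<open>E_V[Z_N] \<le> M + \<surd>(2 A (ln N + 1/2))\<close>, and \<open>A a = N E_N(V) \<le> 2 N E[U]\<close>.
\<close>

lemma exp_minus_le_quadratic:
  fixes x :: real
  assumes "0 \<le> x"
  shows "x - 1 + exp (-x) \<le> x\<^sup>2 / 2"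
proof -
  have pos: "0 < 1 + x + x\<^sup>2 / 2" using assms by (simp add: add_pos_nonneg)
  have "exp (-x) \<le> 1 / (1 + x + x\<^sup>2 / 2)"
    using exp_lower_Taylor_quadratic[OF assms] pos by (simp add: exp_minus inverse_eq_divide frac_le)
  also have "\<dots> \<le> 1 - x + x\<^sup>2 / 2"
  proof -
    have "(1 - x + x\<^sup>2 / 2) * (1 + x + x\<^sup>2 / 2) = 1 + x ^ 4 / 4"
      by (simp add: power2_eq_square power4_eq_xxxx algebra_simps)
    then show ?thesis using pos by (simp add: divide_le_eq)
  qed
  finally show ?thesis by simp
qed

lemma bernoulli_mgf_le:
  fixes a b l :: real
  assumes "0 < a" "0 < b" "0 \<le> l"
  shows "b / (a + b) + a / (a + b) * exp l \<le> exp (l - b / (a + b) * (1 - exp (-l)))"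
proof -
  define r where "r = b / (a + b)"
  define q where "q = r * (1 - exp (-l))"
  have "exp l * (1 - q) = exp l - r * exp l + r * (exp l * exp (-l))"
    by (simp add: q_def algebra_simps)
  also have "\<dots> = r + a / (a + b) * exp l"
    using assms by (simp add: r_def exp_minus field_simps)
  finally have "b / (a + b) + a / (a + b) * exp l = exp l * (1 - q)" by (simp add: r_def)
  also have "\<dots> \<le> exp l * exp (-q)"
    using exp_ge_add_one_self[of "-q"] by (intro mult_left_mono) auto
  also have "\<dots> = exp (l - q)" by (simp add: exp_diff exp_minus field_simps)
  finally show ?thesis unfolding q_def r_def .
qed

lemma chernoff_exponent_le:
  fixes l m A :: real
  assumes "0 \<le> l" "0 \<le> A"
  shows "l * (m + A) - (1 - exp (-l)) * (A - 1/2) \<le> l * m + A * l\<^sup>2 / 2 + 1/2"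
proof -
  have "l * (m + A) - (1 - exp (-l)) * (A - 1/2) = l * m + A * (l - 1 + exp (-l)) + (1 - exp (-l)) / 2"
    by (simp add: algebra_simps)
  also have "A * (l - 1 + exp (-l)) \<le> A * (l\<^sup>2 / 2)"
    using exp_minus_le_quadratic assms by (intro mult_left_mono) auto
  also have "(1 - exp (-l)) / 2 \<le> 1/2" by simp
  finally show ?thesis by simp
qed

text \<open>The choice \<open>l = \<surd>(2c/A)\<close> balances the two terms \<open>c/l\<close> and \<open>A l/2\<close>.\<close>

lemma le_add_sqrt_of_quadratic_bound:
  fixes z m c A :: real
  assumes "0 < A" "0 < c"
    and bound: "\<And>l. 0 < l \<Longrightarrow> l * z \<le> l * m + c + A * l\<^sup>2 / 2"
  shows "z \<le> m + sqrt (2 * A * c)"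
proof -
  define l where "l = sqrt (2 * c / A)"
  have l: "0 < l" "l\<^sup>2 = 2 * c / A" using assms(1,2) by (auto simp: l_def)
  have "z \<le> m + (c / l + A * l / 2)"
    using bound[OF l(1)] l(1) by (simp add: field_simps power2_eq_square)
  also have "c / l + A * l / 2 = sqrt (2 * A * c)"
  proof (rule real_sqrt_unique[symmetric])
    have "A * l / 2 = c / l" using l assms(1) by (simp add: field_simps power2_eq_square)
    then show "(c / l + A * l / 2)\<^sup>2 = 2 * A * c"
      using l assms(1) by (simp add: field_simps power2_eq_square)
    show "0 \<le> c / l + A * l / 2" using l assms by simp
  qed
  finally show ?thesis by simp
qed

lemma ln_ge_half:
  assumes "2 \<le> n"
  shows "1/2 \<le> ln (real n)"
proof -
  have "ln (2::real) \<le> ln (real n)" using assms by simp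
  with ln2_ge_two_thirds show ?thesis by linarith
qed

section \<open>Maximum of finitely many variables\<close>

lemma expectation_Max_le_ln_card_mult:
  fixes p :: "'b pmf" and f :: "'i \<Rightarrow> 'b \<Rightarrow> real"
  assumes "finite (set_pmf p)" "finite I" "I \<noteq> {}"
    and mgf: "\<And>i. i \<in> I \<Longrightarrow> measure_pmf.expectation p (\<lambda>x. exp (l * f i x)) \<le> B"
  shows "l * measure_pmf.expectation p (\<lambda>x. Max ((\<lambda>i. f i x) ` I)) \<le> ln (real (card I) * B)"
proof -
  have int: "integrable (measure_pmf p) g" for g :: "'b \<Rightarrow> real"
    by (rule integrable_measure_pmf_finite[OF assms(1)])
  have exp_Max: "exp (l * Max ((\<lambda>i. f i x) ` I)) \<le> (\<Sum>i\<in>I. exp (l * f i x))" for x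
  proof -
    have "Max ((\<lambda>i. f i x) ` I) \<in> (\<lambda>i. f i x) ` I" using assms(2,3) by simp
    then obtain i where "i \<in> I" "Max ((\<lambda>i. f i x) ` I) = f i x" by blast
    then show ?thesis by (metis member_le_sum exp_ge_zero assms(2))
  qed
  have "exp (measure_pmf.expectation p (\<lambda>x. l * Max ((\<lambda>i. f i x) ` I)))
          \<le> measure_pmf.expectation p (\<lambda>x. exp (l * Max ((\<lambda>i. f i x) ` I)))"
    by (rule measure_pmf.jensens_inequality[where I=UNIV]) (auto intro: int exp_convex)
  also have "\<dots> \<le> measure_pmf.expectation p (\<lambda>x. \<Sum>i\<in>I. exp (l * f i x))"
    by (rule integral_mono[OF int int exp_Max])
  also have "\<dots> = (\<Sum>i\<in>I. measure_pmf.expectation p (\<lambda>x. exp (l * f i x)))"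
    by (rule Bochner_Integration.integral_sum) (rule int)
  also have "\<dots> \<le> real (card I) * B"
    using sum_mono[OF mgf] by simp
  finally have "exp (l * measure_pmf.expectation p (\<lambda>x. Max ((\<lambda>i. f i x) ` I))) \<le> real (card I) * B"
    by simp
  then show ?thesis
    by (metis exp_gt_zero ln_exp ln_le_cancel_iff order_less_le_trans)
qed

section \<open>The random tournament\<close>

abbreviation tourn_pairs :: "nat \<Rightarrow> (nat \<times> nat) set" where
  "tourn_pairs N \<equiv> {(i, j). 1 \<le> i \<and> i < j \<and> j \<le> N}"

lemma finite_tourn_pairs: "finite (tourn_pairs N)"
  by (rule finite_subset[of _ "{1..N} \<times> {1..N}"]) auto

lemma finite_set_pmf_tourn_pmf: "finite (set_pmf (tourn_pmf N v))"
proof (rule finite_subset)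
  show "set_pmf (tourn_pmf N v) \<subseteq> PiE_dflt (tourn_pairs N) False (\<lambda>_. UNIV)"
    unfolding tourn_pmf_def using set_Pi_pmf_subset[OF finite_tourn_pairs]
    by (fastforce simp: PiE_dflt_def)
  show "finite (PiE_dflt (tourn_pairs N) False (\<lambda>_. UNIV :: bool set))"
    by (rule finite_PiE_dflt[OF finite_tourn_pairs]) simp
qed

lemma prod_tourn_pairs_opponents:
  fixes h :: "nat \<times> nat \<Rightarrow> real"
  assumes i: "i \<in> {1..N}"
    and trivial: "\<And>k m. 1 \<le> k \<Longrightarrow> k < m \<Longrightarrow> m \<le> N \<Longrightarrow> k \<noteq> i \<Longrightarrow> m \<noteq> i \<Longrightarrow> h (k, m) = 1"
  shows "(\<Prod>e\<in>tourn_pairs N. h e) = (\<Prod>j\<in>{1..N} - {i}. h (min i j, max i j))"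
proof -
  let ?Q = "{e \<in> tourn_pairs N. fst e = i \<or> snd e = i}"
  have "(\<Prod>e\<in>tourn_pairs N. h e) = (\<Prod>e\<in>?Q. h e)"
    by (rule prod.mono_neutral_right[OF finite_tourn_pairs]) (auto intro: trivial)
  also have "?Q = (\<lambda>j. (min i j, max i j)) ` ({1..N} - {i})"
  proof (intro equalityI subsetI)
    fix e assume "e \<in> ?Q"
    then obtain k m where e: "e = (k, m)" "1 \<le> k" "k < m" "m \<le> N" "k = i \<or> m = i" by auto
    then show "e \<in> (\<lambda>j. (min i j, max i j)) ` ({1..N} - {i})"
      by (cases "k = i") (auto intro: image_eqI[where x=m] image_eqI[where x=k])
  next
    fix e assume "e \<in> (\<lambda>j. (min i j, max i j)) ` ({1..N} - {i})"
    then obtain j where "j \<in> {1..N}" "j \<noteq> i" "e = (min i j, max i j)" by blast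
    then show "e \<in> ?Q" using i by (cases "i < j") (auto simp: min_def max_def)
  qed
  also have "(\<Prod>e\<in>\<dots>. h e) = (\<Prod>j\<in>{1..N} - {i}. h (min i j, max i j))"
    by (rule prod.reindex[unfolded comp_def]) (auto intro!: inj_onI simp: min_def max_def split: if_splits)
  finally show ?thesis .
qed

lemma expectation_exp_score:
  assumes pos: "\<And>k. k \<in> {1..N} \<Longrightarrow> 0 < v k" and i: "i \<in> {1..N}"
  shows "measure_pmf.expectation (tourn_pmf N v) (\<lambda>X. exp (l * score N X i))
       = (\<Prod>j\<in>{1..N} - {i}. v j / (v i + v j) + v i / (v i + v j) * exp l)"
proof -
  define p where "p = (\<lambda>(a, b). bernoulli_pmf (v a / (v a + v b)))"
  define g where "g = (\<lambda>(e :: nat \<times> nat) (x :: bool).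
    if fst e = i then exp (l * of_bool x) else if snd e = i then exp (l * of_bool (\<not> x)) else 1)"
  have exp_score: "exp (l * score N X i) = (\<Prod>e\<in>tourn_pairs N. g e (X e))" for X
  proof -
    have "exp (l * score N X i) = (\<Prod>j\<in>{1..N} - {i}. exp (l * of_bool (Xwin X i j)))"
      unfolding score_def sum_distrib_left by (rule exp_sum) simp
    also have "\<dots> = (\<Prod>j\<in>{1..N} - {i}. g (min i j, max i j) (X (min i j, max i j)))"
      by (rule prod.cong) (auto simp: g_def Xwin_def min_def max_def)
    also have "\<dots> = (\<Prod>e\<in>tourn_pairs N. g e (X e))"
      by (rule prod_tourn_pairs_opponents[OF i, symmetric]) (auto simp: g_def)
    finally show ?thesis .
  qed
  have "measure_pmf.expectation (tourn_pmf N v) (\<lambda>X. exp (l * score N X i))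
      = measure_pmf.expectation (Pi_pmf (tourn_pairs N) False p) (\<lambda>X. \<Prod>e\<in>tourn_pairs N. g e (X e))"
    by (simp add: exp_score tourn_pmf_def p_def)
  also have "\<dots> = (\<Prod>e\<in>tourn_pairs N. measure_pmf.expectation (p e) (g e))"
    by (rule expectation_prod_Pi_pmf[OF finite_tourn_pairs])
       (auto intro: integrable_measure_pmf_finite simp: g_def)
  also have "\<dots> = (\<Prod>j\<in>{1..N} - {i}. measure_pmf.expectation (p (min i j, max i j)) (g (min i j, max i j)))"
    by (rule prod_tourn_pairs_opponents[OF i]) (auto simp: g_def)
  also have "\<dots> = (\<Prod>j\<in>{1..N} - {i}. v j / (v i + v j) + v i / (v i + v j) * exp l)"
  proof (rule prod.cong)
    fix j assume j: "j \<in> {1..N} - {i}"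
    have "0 < v i" "0 < v j" using pos i j by auto
    then show "measure_pmf.expectation (p (min i j, max i j)) (g (min i j, max i j))
          = v j / (v i + v j) + v i / (v i + v j) * exp l"
      using j by (cases "i < j") (auto simp: p_def g_def min_def max_def field_simps)
  qed simp
  finally show ?thesis .
qed

definition win_mass :: "nat \<Rightarrow> (nat \<Rightarrow> real) \<Rightarrow> real" where
  "win_mass N v = (\<Sum>j=1..N-1. v (N-1) / (v (N-1) + v j))"

definition loss_mass :: "nat \<Rightarrow> (nat \<Rightarrow> real) \<Rightarrow> real" where
  "loss_mass N v = (\<Sum>j=1..N-1. v j / (v (N-1) + v j))"

text \<open>Since \<open>v i \<le> v (N-1)\<close>, player \<open>i\<close> loses to each \<open>j\<close> at least as likely as player
  \<open>N-1\<close> would; the \<open>1/2\<close> pays for the summand \<open>j = i\<close>, which is missing on the right.\<close>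

lemma loss_mass_le_expected_losses:
  fixes v :: "nat \<Rightarrow> real"
  assumes pos: "\<And>k. k \<in> {1..N} \<Longrightarrow> 0 < v k"
    and mono: "\<And>i j. 1 \<le> i \<Longrightarrow> i \<le> j \<Longrightarrow> j \<le> N \<Longrightarrow> v i \<le> v j"
    and i: "i \<in> {1..N-1}"
  shows "loss_mass N v - 1/2 \<le> (\<Sum>j\<in>{1..N} - {i}. v j / (v i + v j))"
proof -
  let ?a = "v (N-1)"
  have vi: "0 < v i" "v i \<le> ?a" using pos mono i by auto
  have "(\<Sum>j=1..N-1. v j / (?a + v j)) = (\<Sum>j\<in>{1..N-1} - {i}. v j / (?a + v j)) + v i / (?a + v i)"
    using i by (simp add: sum_diff1)
  also have "v i / (?a + v i) \<le> 1/2" using vi by (simp add: divide_le_eq)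
  also have "(\<Sum>j\<in>{1..N-1} - {i}. v j / (?a + v j)) \<le> (\<Sum>j\<in>{1..N} - {i}. v j / (?a + v j))"
  proof (rule sum_mono2)
    fix j assume "j \<in> {1..N} - {i} - ({1..N-1} - {i})"
    then have "0 < v j" using pos by auto
    then show "0 \<le> v j / (?a + v j)" using vi by simp
  qed auto
  also have "\<dots> \<le> (\<Sum>j\<in>{1..N} - {i}. v j / (v i + v j))"
  proof (rule sum_mono)
    fix j assume "j \<in> {1..N} - {i}"
    then have "0 < v j" using pos by auto
    then show "v j / (?a + v j) \<le> v j / (v i + v j)"
      using vi by (intro divide_left_mono) auto
  qed
  finally show ?thesis by (simp add: loss_mass_def)
qed

lemma win_mass_add_loss_mass:
  assumes "1 \<le> N" and pos: "\<And>k. k \<in> {1..N-1} \<Longrightarrow> 0 < v k"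
  shows "win_mass N v + loss_mass N v = real N - 1"
proof -
  have "win_mass N v + loss_mass N v = (\<Sum>j=1..N-1. 1)"
    unfolding win_mass_def loss_mass_def sum.distrib[symmetric]
  proof (rule sum.cong)
    fix j assume "j \<in> {1..N-1}"
    moreover have "N - 1 \<in> {1..N-1}" if "j \<in> {1..N-1}" using that by auto
    ultimately have "0 < v (N-1) + v j" using pos by (simp add: add_pos_pos)
    then show "v (N-1) / (v (N-1) + v j) + v j / (v (N-1) + v j) = 1"
      by (simp add: add_divide_distrib[symmetric])
  qed simp
  then show ?thesis using assms(1) by (simp add: of_nat_diff)
qed

lemma loss_mass_pos:
  assumes "2 \<le> N" and pos: "\<And>k. k \<in> {1..N} \<Longrightarrow> 0 < v k"
  shows "0 < loss_mass N v"
  unfolding loss_mass_def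
  by (rule sum_pos) (use assms in \<open>auto intro!: divide_pos_pos add_pos_pos\<close>)

lemma loss_mass_mult_eq_E_N:
  assumes "1 \<le> N"
  shows "loss_mass N v * v (N-1) = real N * E_N N v"
  using assms by (simp add: E_N_def loss_mass_def sum_distrib_right)

lemma expectation_exp_score_le:
  fixes v :: "nat \<Rightarrow> real"
  assumes pos: "\<And>k. k \<in> {1..N} \<Longrightarrow> 0 < v k"
    and mono: "\<And>i j. 1 \<le> i \<Longrightarrow> i \<le> j \<Longrightarrow> j \<le> N \<Longrightarrow> v i \<le> v j"
    and i: "i \<in> {1..N-1}" and l: "0 \<le> l"
  shows "measure_pmf.expectation (tourn_pmf N v) (\<lambda>X. exp (l * score N X i))
     \<le> exp (l * win_mass N v + loss_mass N v * l\<^sup>2 / 2 + 1/2)"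
proof -
  let ?t = "1 - exp (-l)"
  have iN: "i \<in> {1..N}" using i by auto
  have "measure_pmf.expectation (tourn_pmf N v) (\<lambda>X. exp (l * score N X i))
      = (\<Prod>j\<in>{1..N} - {i}. v j / (v i + v j) + v i / (v i + v j) * exp l)"
    by (rule expectation_exp_score[OF pos iN])
  also have "\<dots> \<le> (\<Prod>j\<in>{1..N} - {i}. exp (l - v j / (v i + v j) * ?t))"
  proof (rule prod_mono)
    fix j assume "j \<in> {1..N} - {i}"
    then have "0 < v i" "0 < v j" using pos iN by auto
    then show "0 \<le> v j / (v i + v j) + v i / (v i + v j) * exp l \<and>
        v j / (v i + v j) + v i / (v i + v j) * exp l \<le> exp (l - v j / (v i + v j) * ?t)"
      using bernoulli_mgf_le[of "v i" "v j" l] l by simp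
  qed
  also have "\<dots> = exp (l * (real N - 1) - ?t * (\<Sum>j\<in>{1..N} - {i}. v j / (v i + v j)))"
    using iN by (simp add: exp_sum[symmetric] sum_subtractf sum_distrib_left mult.commute of_nat_diff)
  also have "\<dots> \<le> exp (l * (win_mass N v + loss_mass N v) - ?t * (loss_mass N v - 1/2))"
  proof -
    have "win_mass N v + loss_mass N v = real N - 1"
      by (rule win_mass_add_loss_mass) (use i pos in auto)
    moreover have "?t * (loss_mass N v - 1/2) \<le> ?t * (\<Sum>j\<in>{1..N} - {i}. v j / (v i + v j))"
      using loss_mass_le_expected_losses[where v=v, OF pos mono i] l by (intro mult_left_mono) auto
    ultimately show ?thesis by simp
  qed
  also have "\<dots> \<le> exp (l * win_mass N v + loss_mass N v * l\<^sup>2 / 2 + 1/2)"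
  proof -
    have "0 < loss_mass N v" by (rule loss_mass_pos[where v=v, OF _ pos]) (use i in auto)
    then show ?thesis using chernoff_exponent_le[of l "loss_mass N v" "win_mass N v"] l by simp
  qed
  finally show ?thesis .
qed

lemma cond_exp_Z_chernoff:
  fixes v :: "nat \<Rightarrow> real"
  assumes N: "2 \<le> N"
    and pos: "\<And>k. k \<in> {1..N} \<Longrightarrow> 0 < v k"
    and mono: "\<And>i j. 1 \<le> i \<Longrightarrow> i \<le> j \<Longrightarrow> j \<le> N \<Longrightarrow> v i \<le> v j"
    and l: "0 < l"
  shows "l * cond_exp_Z N v \<le> l * win_mass N v + (ln (real N) + 1/2) + loss_mass N v * l\<^sup>2 / 2"
proof -
  let ?K = "l * win_mass N v + loss_mass N v * l\<^sup>2 / 2 + 1/2"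
  have "l * cond_exp_Z N v \<le> ln (real (card {1..N-1}) * exp ?K)"
    unfolding cond_exp_Z_def Zmax_def
    by (rule expectation_Max_le_ln_card_mult[OF finite_set_pmf_tourn_pmf])
       (use N expectation_exp_score_le[OF pos mono _ less_imp_le[OF l]] in auto)
  also have "\<dots> \<le> ln (real N * exp ?K)"
    using N by (intro ln_mono mult_right_mono) auto
  also have "\<dots> = l * win_mass N v + (ln (real N) + 1/2) + loss_mass N v * l\<^sup>2 / 2"
    using N by (simp add: ln_mult)
  finally show ?thesis .
qed

lemma cond_exp_Z_le:
  fixes v :: "nat \<Rightarrow> real"
  assumes N: "2 \<le> N"
    and pos: "\<And>k. k \<in> {1..N} \<Longrightarrow> 0 < v k"
    and mono: "\<And>i j. 1 \<le> i \<Longrightarrow> i \<le> j \<Longrightarrow> j \<le> N \<Longrightarrow> v i \<le> v j"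
    and E_N_le: "E_N N v \<le> 2 * EU"
  shows "cond_exp_Z N v \<le> win_mass N v + sqrt (8 * EU * (real N * ln (real N)) / v (N-1))"
proof -
  let ?A = "loss_mass N v" and ?c = "ln (real N) + 1/2"
  have A: "0 < ?A" by (rule loss_mass_pos[OF N pos])
  have a: "0 < v (N-1)" using N pos by simp
  have lnN: "1/2 \<le> ln (real N)" by (rule ln_ge_half[OF N])
  have "cond_exp_Z N v \<le> win_mass N v + sqrt (2 * ?A * ?c)"
    using A lnN by (intro le_add_sqrt_of_quadratic_bound cond_exp_Z_chernoff[OF N pos mono]) auto
  also have "2 * ?A * ?c \<le> 8 * EU * (real N * ln (real N)) / v (N-1)"
  proof -
    have "2 * ?A * ?c \<le> 4 * ln (real N) * ?A" using A lnN by (simp add: mult_right_mono)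
    also have "?A \<le> 2 * EU * real N / v (N-1)"
      using loss_mass_mult_eq_E_N[of N v] E_N_le a N by (simp add: field_simps)
    then have "4 * ln (real N) * ?A \<le> 4 * ln (real N) * (2 * EU * real N / v (N-1))"
      using lnN by (intro mult_left_mono) auto
    finally show ?thesis by (simp add: ac_simps)
  qed
  finally show ?thesis by simp
qed

section \<open>Order statistics\<close>

lemma order_stat_mono:
  assumes "1 \<le> i" "i \<le> j" "j \<le> N"
  shows "order_stat U N \<omega> i \<le> order_stat U N \<omega> j"
  unfolding order_stat_def using assms by (intro sorted_nth_mono) auto

lemma order_stat_pos:
  assumes "\<And>k. k \<in> {1..N} \<Longrightarrow> 0 < U k \<omega>" and "k \<in> {1..N}"
  shows "0 < order_stat U N \<omega> k"
proof -
  let ?xs = "map (\<lambda>i. U i \<omega>) [1..<N+1]"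
  have "sort ?xs ! (k - 1) \<in> set ?xs"
    using assms(2) by (metis set_sort nth_mem length_sort length_map length_upt atLeastAtMost_iff
        add_diff_cancel_right' diff_less le_trans less_numeral_extra(1) Suc_le_eq add.commute plus_1_eq_Suc)
  then show ?thesis using assms(1) by (auto simp: order_stat_def)
qed

theorem lemma5:
  fixes M :: "'a measure" and U :: "nat \<Rightarrow> 'a \<Rightarrow> real" and \<mu> :: "real measure"
    and \<beta> x0 :: real and \<eta> :: "real \<Rightarrow> real"
  assumes "prob_space M"
    and "prob_space.indep_vars M (\<lambda>_. borel) U {1..}"
    and "\<And>i. i \<ge> 1 \<Longrightarrow> distr M borel (U i) = \<mu>"
    and "AE x in \<mu>. x > 0"
    and "integrable \<mu> (\<lambda>x. x ^ 2)"
    and "0 < \<beta>" and "\<beta> < 1/2" and "x0 > 0"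
    and "x0 \<in> interior (real_support \<mu>)"
    and "convex_on {x0..} (\<lambda>x. measure \<mu> {x<..} powr (1/2 - \<beta>))"
    and "\<And>x y. 0 \<le> x \<Longrightarrow> x \<le> y \<Longrightarrow> \<eta> y \<le> \<eta> x"
    and "(\<eta> \<longlongrightarrow> 0) at_top"
    and "(\<lambda>N. measure M {\<omega>\<in>space M. order_stat U N \<omega> N / sqrt (real N) \<le> \<eta> (real N)})
           \<longlonglongrightarrow> 1"
  shows "\<exists>N0. \<forall>N\<ge>N0. AE \<omega> in M.
           (let V = order_stat U N \<omega>; EU = (\<integral>x. x \<partial>\<mu>) in
             (V N / sqrt (real N) \<le> \<eta> (real N)
              \<and> EU / 4 \<le> E_N N V \<and> E_N N V \<le> 2 * EU)
             \<longrightarrow> cond_exp_Z N V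
                 \<le> (\<Sum>i=1..N-1. V (N-1) / (V (N-1) + V i))
                   + sqrt (8 * EU * (real N * ln (real N)) / V (N-1)))"
proof -
  interpret prob_space M by (rule assms(1))
  have U_pos: "AE \<omega> in M. 0 < U k \<omega>" if k: "1 \<le> k" for k
  proof -
    have "U k \<in> borel_measurable M" using assms(2) k by (auto simp: indep_vars_def2)
    moreover have "AE x in distr M borel (U k). 0 < x" unfolding assms(3)[OF k] by (rule assms(4))
    ultimately show ?thesis by (simp add: AE_distr_iff)
  qed
  show ?thesis
  proof (intro exI allI impI)
    fix N :: nat assume N: "2 \<le> N"
    have "AE \<omega> in M. \<forall>k\<in>{1..N}. 0 < U k \<omega>"
      by (rule AE_finite_allI) (auto intro: U_pos)
    then show "AE \<omega> in M. (let V = order_stat U N \<omega>; EU = (\<integral>x. x \<partial>\<mu>) in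
             (V N / sqrt (real N) \<le> \<eta> (real N) \<and> EU / 4 \<le> E_N N V \<and> E_N N V \<le> 2 * EU)
             \<longrightarrow> cond_exp_Z N V \<le> (\<Sum>i=1..N-1. V (N-1) / (V (N-1) + V i))
                   + sqrt (8 * EU * (real N * ln (real N)) / V (N-1)))"
    proof eventually_elim
      case (elim \<omega>)
      then have pos: "\<And>k. k \<in> {1..N} \<Longrightarrow> 0 < order_stat U N \<omega> k" by (intro order_stat_pos) auto
      show ?case
        using cond_exp_Z_le[where v="order_stat U N \<omega>", OF N pos order_stat_mono]
        by (simp add: Let_def win_mass_def)
    qed
  qed
qed

end
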